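(* Let $N$ be a phylogenetic network in tier $k>0$, and let $x$ be a split node with children $a_L$ and $a_R$. Let $(u,v)$ be an edge with $u$ a split node lying on the path from $x$ to $a_L$ (i.e. $u$ subdivides the edge $(x,a_L)$), and suppose the tail move of $(u,v)$ from $(x,a_L)$ to $(x,a_R)$ is valid, resulting in $N'$. Then there is a sequence of at most $6$ valid head moves transforming $N$ into $N'$.
   Context: A (binary) phylogenetic network on a finite label set $X$ ($|X|\ge 2$) is a directed acyclic graph without parallel edges having exactly one root (indegree 0, outdegree 1), exactly $|X|$ leaves (indegree 1, outdegree 0) bijectively labelled by $X$, and all other nodes are either split nodes (indegree 1, outdegree 2) or reticulations (indegree 2, outdegree 1). Tier $k$: exactly $k$ reticulations. Subdividing an edge $(a,b)$ means replacing it by a new node $x$ and edges $(a,x),(x,b)$; suppressing an indegree-1 outdegree-1 node $x$ with parent $a$ and child $b$ means deleting $x$ and its edges and adding $(a,b)$. Tail move of $(u,v)$ ($u$ a split node) to edge $f$: delete $(u,v)$, subdivide $f$ with new node $u'$, suppress $u$, add $(u',v)$; "from $(p,q)$ to $f$" means $p$ is the parent and $q$ the other child of $u$ (so $(p,q)$ is the edge created by suppressing $u$). Head move of $(u,v)$ ($v$ a reticulation) to $f$: delete $(u,v)$, subdivide $f$ with new node $v'$, suppress $v$, add $(u,v')$. A move is valid only if the result is a phylogenetic network. *)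

theory Defs
  imports Main
begin

text \<open>Phylogenetic networks: nodes are natural numbers (so fresh nodes always exist),
  edges are a set of pairs (no parallel edges), leaves are labelled by
  lab restricted to X (bijectively onto the leaves).\<close>

definition parents :: "(nat \<times> nat) set \<Rightarrow> nat \<Rightarrow> nat set" where
  "parents E w = {a. (a, w) \<in> E}"

definition children :: "(nat \<times> nat) set \<Rightarrow> nat \<Rightarrow> nat set" where
  "children E w = {b. (w, b) \<in> E}"

definition indeg :: "(nat \<times> nat) set \<Rightarrow> nat \<Rightarrow> nat" where
  "indeg E w = card (parents E w)"

definition outdeg :: "(nat \<times> nat) set \<Rightarrow> nat \<Rightarrow> nat" where
  "outdeg E w = card (children E w)"

definition split_node :: "(nat \<times> nat) set \<Rightarrow> nat \<Rightarrow> bool" where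
  "split_node E w \<longleftrightarrow> indeg E w = 1 \<and> outdeg E w = 2"

definition reticulation :: "(nat \<times> nat) set \<Rightarrow> nat \<Rightarrow> bool" where
  "reticulation E w \<longleftrightarrow> indeg E w = 2 \<and> outdeg E w = 1"

definition reticulations :: "nat set \<Rightarrow> (nat \<times> nat) set \<Rightarrow> nat set" where
  "reticulations V E = {w \<in> V. reticulation E w}"

definition is_network :: "'x set \<Rightarrow> ('x \<Rightarrow> nat) \<Rightarrow> nat set \<Rightarrow> (nat \<times> nat) set \<Rightarrow> bool" where
  "is_network X lab V E \<longleftrightarrow>
     finite X \<and> 2 \<le> card X \<and> finite V \<and> E \<subseteq> V \<times> V \<and> acyclic E \<and>
     card {w \<in> V. indeg E w = 0 \<and> outdeg E w = 1} = 1 \<and>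
     (\<forall>w \<in> V. (indeg E w = 0 \<and> outdeg E w = 1) \<or> (indeg E w = 1 \<and> outdeg E w = 0) \<or>
               split_node E w \<or> reticulation E w) \<and>
     bij_betw lab X {w \<in> V. indeg E w = 1 \<and> outdeg E w = 0}"

definition subdivide :: "nat set \<Rightarrow> (nat \<times> nat) set \<Rightarrow> nat \<times> nat \<Rightarrow> nat \<Rightarrow>
    nat set \<Rightarrow> (nat \<times> nat) set \<Rightarrow> bool" where
  "subdivide V E f w V' E' \<longleftrightarrow> f \<in> E \<and> w \<notin> V \<and> V' = insert w V \<and>
     E' = (E - {f}) \<union> {(fst f, w), (w, snd f)}"

text \<open>Suppressing an indegree-1 outdegree-1 node x (with parent a and child b).
  A resulting parallel edge (a,b) is excluded (never allowed in a network, and no later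
  step of a move deletes it).\<close>
definition suppress :: "nat set \<Rightarrow> (nat \<times> nat) set \<Rightarrow> nat \<Rightarrow>
    nat set \<Rightarrow> (nat \<times> nat) set \<Rightarrow> bool" where
  "suppress V E x V' E' \<longleftrightarrow> x \<in> V \<and> (\<exists>a b. parents E x = {a} \<and> children E x = {b} \<and>
     (a, b) \<notin> E \<and> V' = V - {x} \<and> E' = (E - {(a, x), (x, b)}) \<union> {(a, b)})"

definition tail_move :: "'x set \<Rightarrow> ('x \<Rightarrow> nat) \<Rightarrow> nat set \<Rightarrow> (nat \<times> nat) set \<Rightarrow>
    nat \<Rightarrow> nat \<Rightarrow> nat \<times> nat \<Rightarrow> nat set \<Rightarrow> (nat \<times> nat) set \<Rightarrow> bool" where
  "tail_move X lab V E u v f V' E' \<longleftrightarrow>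
     is_network X lab V E \<and> (u, v) \<in> E \<and> split_node E u \<and>
     (\<exists>u' V1 E1 V2 E2. subdivide V (E - {(u, v)}) f u' V1 E1 \<and> suppress V1 E1 u V2 E2 \<and>
        (u', v) \<notin> E2 \<and> V' = V2 \<and> E' = insert (u', v) E2) \<and>
     is_network X lab V' E'"

definition head_move :: "'x set \<Rightarrow> ('x \<Rightarrow> nat) \<Rightarrow> nat set \<Rightarrow> (nat \<times> nat) set \<Rightarrow>
    nat \<Rightarrow> nat \<Rightarrow> nat \<times> nat \<Rightarrow> nat set \<Rightarrow> (nat \<times> nat) set \<Rightarrow> bool" where
  "head_move X lab V E u v f V' E' \<longleftrightarrow>
     is_network X lab V E \<and> (u, v) \<in> E \<and> reticulation E v \<and>
     (\<exists>v' V1 E1 V2 E2. subdivide V (E - {(u, v)}) f v' V1 E1 \<and> suppress V1 E1 v V2 E2 \<and>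
        (u, v') \<notin> E2 \<and> V' = V2 \<and> E' = insert (u, v') E2) \<and>
     is_network X lab V' E'"

definition head_step :: "'x set \<Rightarrow> ('x \<Rightarrow> nat) \<Rightarrow>
    ((nat set \<times> (nat \<times> nat) set) \<times> (nat set \<times> (nat \<times> nat) set)) set" where
  "head_step X lab = {((V, E), (V', E')). \<exists>u v f. head_move X lab V E u v f V' E'}"

definition net_iso :: "'x set \<Rightarrow> ('x \<Rightarrow> nat) \<Rightarrow> nat set \<Rightarrow> (nat \<times> nat) set \<Rightarrow>
    nat set \<Rightarrow> (nat \<times> nat) set \<Rightarrow> bool" where
  "net_iso X lab V E V' E' \<longleftrightarrow> (\<exists>\<phi>. bij_betw \<phi> V V' \<and>
     (\<forall>a \<in> V. \<forall>b \<in> V. (a, b) \<in> E \<longleftrightarrow> (\<phi> a, \<phi> b) \<in> E') \<and>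
     (\<forall>y \<in> X. \<phi> (lab y) = lab y))"

end

theory Submission
  imports Defs
begin

text \<open>Up to renaming the node it creates, the tail move of (u, v) from (x, aL) to (x, aR)
  just exchanges the heads of the edges (x, aR) and (u, aL). Heads are exchanged by head moves
  at a reticulation: if Z has parents P, s and child c, and (s, c) is not an edge, then moving
  (P, Z) onto (Q, Y) and afterwards the new edge (Q, w) onto the edge (s, c) that replaced Z
  exchanges the heads of (P, Z) and (Q, Y). So two moves suffice when aL or aR is a reticulation
  (four when its child is a reticulation with the same second parent). Otherwise a lowest
  reticulation r is borrowed: a parent edge of r is moved onto one of the two edges, the exchange
  is performed at the new reticulation, and the parent edge is moved back. In all cases at most
  four head moves are needed.\<close>

section \<open>Acyclicity\<close>

lemma finite_acyclic_obtains_rank: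
  assumes "finite G" "acyclic G"
  obtains h :: "'a \<Rightarrow> nat" where "\<And>a b. (a, b) \<in> G \<Longrightarrow> h b < h a"
proof
  fix a b assume ab: "(a, b) \<in> G"
  have "finite {z. (a, z) \<in> G\<^sup>+}"
    by (rule finite_subset[of _ "Range G"]) (auto elim: tranclE intro: finite_Range assms(1))
  moreover have "{z. (b, z) \<in> G\<^sup>+} \<subset> {z. (a, z) \<in> G\<^sup>+}"
    using ab assms(2) by (auto simp: acyclic_def intro: trancl_into_trancl2)
  ultimately show "card {z. (b, z) \<in> G\<^sup>+} < card {z. (a, z) \<in> G\<^sup>+}"
    by (rule psubset_card_mono)
qed

lemma acyclic_insert_trancl: "acyclic G \<Longrightarrow> (a, b) \<in> G\<^sup>+ \<Longrightarrow> acyclic (insert (a, b) G)"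
  unfolding acyclic_insert by (meson acyclic_def trancl_rtrancl_trancl)

lemma acyclic_insert_before:
  assumes "finite G" "acyclic G" "w \<notin> Field G" "b \<noteq> w"
  shows "acyclic (insert (w, b) (G \<union> {(z, w) | z. (z, b) \<in> G}))"
proof -
  obtain h :: "'a \<Rightarrow> nat" where h: "\<And>a c. (a, c) \<in> G \<Longrightarrow> h c < h a"
    using finite_acyclic_obtains_rank[OF assms(1,2)] by blast
  let ?h = "\<lambda>y. if y = w then 2 * h b + 1 else 2 * h y"
  show ?thesis
  proof (rule acyclicI_order[where f = ?h])
    fix s t assume "(s, t) \<in> insert (w, b) (G \<union> {(z, w) | z. (z, b) \<in> G})"
    then consider "(s, t) \<in> G" | "s = w" "t = b" | "t = w" "(s, b) \<in> G" by blast
    then show "?h t < ?h s"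
    proof cases
      case 1
      then have "s \<noteq> w" "t \<noteq> w" using assms(3) by (auto simp: Field_def)
      with 1 show ?thesis using h by simp
    next
      case 3
      then have "s \<noteq> w" using assms(3) by (auto simp: Field_def)
      with 3 show ?thesis using h[of s b] by simp
    qed (use assms(4) in simp)
  qed
qed

lemma acyclic_insert_sink:
  assumes "acyclic G" "\<And>t. (l, t) \<notin> G" "l \<noteq> z"
  shows "acyclic (insert (z, l) G)"
  using assms by (auto elim: converse_rtranclE)

lemma not_rtrancl_insert: "(x, y) \<notin> E\<^sup>* \<Longrightarrow> (x, c) \<notin> E\<^sup>* \<Longrightarrow> (x, y) \<notin> (insert (c, d) E)\<^sup>*"
  by (simp add: rtrancl_insert)

lemma relpow_2I: "(a, b) \<in> R \<Longrightarrow> (b, c) \<in> R \<Longrightarrow> (a, c) \<in> R ^^ 2"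
  by (simp add: numeral_2_eq_2 relcomp.relcompI)

lemma relpow_4I: "(a, b) \<in> R \<Longrightarrow> (b, c) \<in> R ^^ 2 \<Longrightarrow> (c, d) \<in> R \<Longrightarrow> (a, d) \<in> R ^^ 4"
  by (simp add: eval_nat_numeral relpow_Suc_I relpow_Suc_I2 del: relpow.simps)

section \<open>Local structure of networks\<close>

lemma is_networkD:
  assumes "is_network X lab V E"
  shows "finite V" "E \<subseteq> V \<times> V" "acyclic E" "2 \<le> card X"
    "\<And>y. y \<in> V \<Longrightarrow> (indeg E y = 0 \<and> outdeg E y = 1) \<or> (indeg E y = 1 \<and> outdeg E y = 0) \<or>
       split_node E y \<or> reticulation E y"
    "bij_betw lab X {y \<in> V. indeg E y = 1 \<and> outdeg E y = 0}"
  using assms unfolding is_network_def by auto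

lemma network_edge_nodes:
  assumes "is_network X lab V E" "(a, b) \<in> E" shows "a \<in> V \<and> b \<in> V"
  using is_networkD(2)[OF assms(1)] assms(2) by blast

lemma network_finite_edges:
  assumes "is_network X lab V E" shows "finite E"
  using is_networkD(1,2)[OF assms] by (meson finite_SigmaI finite_subset)

lemma network_no_loop:
  assumes "is_network X lab V E" shows "(y, y) \<notin> E"
  using is_networkD(3)[OF assms] unfolding acyclic_def by blast

lemma network_fresh_node:
  assumes "is_network X lab V E"
  obtains w where "w \<notin> V"
  using is_networkD(1)[OF assms] infinite_UNIV_nat ex_new_if_finite by blast

lemma finite_parents:
  assumes "is_network X lab V E" shows "finite (parents E y)"
  using is_networkD(1,2)[OF assms] by (auto simp: parents_def intro: finite_subset[of _ V])

lemma finite_children: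
  assumes "is_network X lab V E" shows "finite (children E y)"
  using is_networkD(1,2)[OF assms] by (auto simp: children_def intro: finite_subset[of _ V])

lemma card_2_eq_pair: "finite S \<Longrightarrow> card S = 2 \<Longrightarrow> a \<in> S \<Longrightarrow> b \<in> S \<Longrightarrow> a \<noteq> b \<Longrightarrow> S = {a, b}"
proof -
  assume "finite S" "card S = 2" "a \<in> S" "b \<in> S" "a \<noteq> b"
  then show "S = {a, b}" using card_subset_eq[of S "{a, b}"] by simp
qed

lemma split_node_children:
  assumes "split_node E y" "(y, b1) \<in> E" "(y, b2) \<in> E" "b1 \<noteq> b2"
  shows "children E y = {b1, b2}"
proof -
  have card: "card (children E y) = 2" using assms(1) by (simp add: split_node_def outdeg_def)
  then have "finite (children E y)" using card.infinite by fastforce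
  moreover have "b1 \<in> children E y" "b2 \<in> children E y" using assms(2,3) by (auto simp: children_def)
  ultimately show ?thesis using card_2_eq_pair[OF _ card _ _ assms(4)] by blast
qed

lemma split_node_parent:
  assumes "split_node E y" "(a, y) \<in> E"
  shows "parents E y = {a}"
proof -
  have "card (parents E y) = 1" using assms(1) by (simp add: split_node_def indeg_def)
  then obtain z where "parents E y = {z}" by (rule card_1_singletonE)
  with assms(2) show ?thesis by (auto simp: parents_def)
qed

lemma reticulation_parents:
  assumes "reticulation E y" "(p, y) \<in> E"
  obtains s where "parents E y = {p, s}" "p \<noteq> s"
proof -
  have "card (parents E y) = 2" using assms(1) by (simp add: reticulation_def indeg_def)
  then obtain a b where ab: "parents E y = {a, b}" "a \<noteq> b" by (auto simp: card_2_iff)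
  moreover have "p \<in> {a, b}" using assms(2) ab(1) by (auto simp: parents_def)
  ultimately show ?thesis using that by (metis insert_commute insertE singletonD)
qed

lemma reticulation_child:
  assumes "reticulation E y"
  obtains c where "children E y = {c}"
proof -
  have "card (children E y) = 1" using assms by (simp add: reticulation_def outdeg_def)
  then show ?thesis using that by (rule card_1_singletonE)
qed

lemma network_two_parents:
  assumes net: "is_network X lab V E" and "(p, y) \<in> E" "(q, y) \<in> E" "p \<noteq> q"
  shows "reticulation E y" "parents E y = {p, q}"
proof -
  have sub: "{p, q} \<subseteq> parents E y" using assms by (auto simp: parents_def)
  then have "2 \<le> indeg E y"
    unfolding indeg_def using card_mono[OF finite_parents[OF net] sub] assms(4) by simp
  moreover have "y \<in> V" using network_edge_nodes[OF net assms(2)] by blast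
  ultimately show ret: "reticulation E y"
    using is_networkD(5)[OF net, of y] by (auto simp: split_node_def)
  then have "card (parents E y) = 2" by (simp add: reticulation_def indeg_def)
  then show "parents E y = {p, q}"
    using card_2_eq_pair[OF finite_parents[OF net]] sub assms(4) by auto
qed

lemma network_two_children:
  assumes net: "is_network X lab V E" and "(y, b1) \<in> E" "(y, b2) \<in> E" "b1 \<noteq> b2"
  shows "children E y = {b1, b2}"
proof -
  have sub: "{b1, b2} \<subseteq> children E y" using assms by (auto simp: children_def)
  then have "2 \<le> outdeg E y"
    unfolding outdeg_def using card_mono[OF finite_children[OF net] sub] assms(4) by simp
  moreover have "y \<in> V" using network_edge_nodes[OF net assms(2)] by blast
  ultimately have "split_node E y"
    using is_networkD(5)[OF net, of y] by (auto simp: reticulation_def)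
  then show ?thesis using split_node_children assms(2-4) by blast
qed

lemma network_unique_parent:
  assumes net: "is_network X lab V E" and "(a, y) \<in> E" "\<not> reticulation E y"
  shows "parents E y = {a}"
proof -
  have "a \<in> parents E y" using assms(2) by (simp add: parents_def)
  then have "indeg E y \<noteq> 0" unfolding indeg_def using finite_parents[OF net] by auto
  moreover have "y \<in> V" using network_edge_nodes[OF net assms(2)] by blast
  ultimately have "indeg E y = 1"
    using is_networkD(5)[OF net, of y] assms(3) by (auto simp: split_node_def)
  then obtain z where "parents E y = {z}" unfolding indeg_def by (rule card_1_singletonE)
  with assms(2) show ?thesis by (auto simp: parents_def)
qed

lemma network_leaf_edge:
  assumes net: "is_network X lab V E"
  obtains a l where "(a, l) \<in> E" "l \<noteq> c" "\<And>t. (l, t) \<notin> E"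
proof -
  let ?L = "{y \<in> V. indeg E y = 1 \<and> outdeg E y = 0}"
  have "card ?L \<ge> 2"
    using bij_betw_same_card[OF is_networkD(6)[OF net]] is_networkD(4)[OF net] by simp
  then have "\<not> ?L \<subseteq> {c}"
    using card_mono[of "{c}" ?L] by auto
  then obtain l where l: "l \<in> ?L" "l \<noteq> c" by blast
  have "card (parents E l) = 1" using l(1) by (simp add: indeg_def)
  then obtain a where "parents E l = {a}" by (rule card_1_singletonE)
  moreover have "children E l = {}" using l(1) finite_children[OF net] by (simp add: outdeg_def)
  ultimately show ?thesis using that l(2) by (auto simp: parents_def children_def)
qed

lemma network_lowest_reticulation:
  assumes net: "is_network X lab V E" and "reticulations V E \<noteq> {}"
  obtains r where "reticulation E r" "\<And>m. reticulation E m \<Longrightarrow> (m, r) \<notin> E\<^sup>+"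
proof -
  have "wf (E\<^sup>+)"
    using finite_acyclic_wf[OF network_finite_edges[OF net] is_networkD(3)[OF net]] by (rule wf_trancl)
  then obtain r where r: "r \<in> reticulations V E" "\<And>m. (m, r) \<in> E\<^sup>+ \<Longrightarrow> m \<notin> reticulations V E"
    using assms(2) by (metis wfE_min')
  have "(m, r) \<notin> E\<^sup>+" if "reticulation E m" for m
  proof
    assume mr: "(m, r) \<in> E\<^sup>+"
    then obtain z where "(m, z) \<in> E" by (meson tranclD)
    then have "m \<in> V" using network_edge_nodes[OF net] by blast
    then show False using r(2)[OF mr] that by (simp add: reticulations_def)
  qed
  moreover have "reticulation E r" using r(1) by (simp add: reticulations_def)
  ultimately show ?thesis using that by blast
qed

lemma common_descendant_below_reticulation:
  assumes net: "is_network X lab V E"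
    and "(b1, b2) \<notin> E\<^sup>*" "(b2, b1) \<notin> E\<^sup>*" "(b1, y) \<in> E\<^sup>*" "(b2, y) \<in> E\<^sup>*"
  shows "\<exists>m. reticulation E m \<and> (m, y) \<in> E\<^sup>*"
  using assms(4,5)
proof (induction rule: rtrancl_induct)
  case base
  then show ?case using assms(3) by simp
next
  case (step y z)
  show ?case
  proof (cases "(b2, y) \<in> E\<^sup>*")
    case True
    then show ?thesis using step.IH step.hyps(2) by (meson rtrancl.rtrancl_into_rtrancl)
  next
    case False
    have "z \<noteq> b2" using step.hyps assms(2) by (meson rtrancl.rtrancl_into_rtrancl)
    then obtain y' where "(b2, y') \<in> E\<^sup>*" "(y', z) \<in> E" using step.prems by (metis rtranclE)
    then have "reticulation E z"
      using network_two_parents(1)[OF net step.hyps(2)] False by blast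
    then show ?thesis by blast
  qed
qed

lemma reticulation_parents_avoiding:
  assumes net: "is_network X lab V E" and r: "reticulation E r" "children E r = {c}"
    and u: "(u, r) \<in> E \<Longrightarrow> (u, c) \<notin> E"
  obtains p q where "parents E r = {p, q}" "p \<noteq> q" "(q, c) \<notin> E" "p \<noteq> u"
proof -
  obtain p1 p2 where p: "parents E r = {p1, p2}" "p1 \<noteq> p2"
    using r(1) by (auto simp: reticulation_def indeg_def card_2_iff)
  have "(r, c) \<in> E" using r(2) by (auto simp: children_def)
  have not_both: "(p1, c) \<notin> E \<or> (p2, c) \<notin> E"
  proof (rule ccontr)
    assume "\<not> ?thesis"
    then have "parents E c = {p1, p2}" using network_two_parents(2)[OF net _ _ p(2)] by blast
    then have "r \<in> {p1, p2}" using \<open>(r, c) \<in> E\<close> by (auto simp: parents_def)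
    then show False using p(1) network_no_loop[OF net] by (auto simp: parents_def)
  qed
  show ?thesis
  proof (cases "u \<in> {p1, p2}")
    case True
    then show ?thesis
      using that p u by (auto simp: parents_def insert_commute)
  next
    case False
    then show ?thesis
      using that p not_both by (metis insert_commute insertCI)
  qed
qed

section \<open>Head moves\<close>

text \<open>Edges after the head move of (p, r) onto (a, b), where r has parents p, q and child c:
  r is suppressed into the edge (q, c), and the node w subdividing (a, b) becomes the new head.\<close>
definition head_moved :: "(nat \<times> nat) set \<Rightarrow> nat \<Rightarrow> nat \<Rightarrow> nat \<Rightarrow> nat \<Rightarrow> nat \<Rightarrow> nat \<Rightarrow> nat \<Rightarrow>
    (nat \<times> nat) set" where
  "head_moved E p r q c a b w = E - {(p, r), (q, r), (r, c), (a, b)} \<union> {(q, c), (a, w), (w, b), (p, w)}"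

context
  fixes X :: "'x set" and lab :: "'x \<Rightarrow> nat" and V E and p r q c a b w :: nat
  assumes net: "is_network X lab V E"
    and r_parents: "parents E r = {p, q}" and pq: "p \<noteq> q" and r_child: "children E r = {c}"
    and ab: "(a, b) \<in> E" "a \<noteq> r" "b \<noteq> r"
    and qc: "(q, c) \<notin> E" and ap: "a \<noteq> p" and w: "w \<notin> V"
begin

private lemma edges_at_r_and_w:
  shows "(p, r) \<in> E" "(q, r) \<in> E" "(r, c) \<in> E"
    and "\<And>s. (s, r) \<in> E \<longleftrightarrow> s = p \<or> s = q" "\<And>t. (r, t) \<in> E \<longleftrightarrow> t = c"
    and "\<And>s. (s, w) \<notin> E" "\<And>t. (w, t) \<notin> E"
    and "p \<noteq> r" "q \<noteq> r" "c \<noteq> r"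
    and "w \<noteq> p" "w \<noteq> q" "w \<noteq> r" "w \<noteq> c" "w \<noteq> a" "w \<noteq> b"
proof -
  show pr: "(p, r) \<in> E" "(q, r) \<in> E" and rc: "(r, c) \<in> E"
    and "\<And>s. (s, r) \<in> E \<longleftrightarrow> s = p \<or> s = q" "\<And>t. (r, t) \<in> E \<longleftrightarrow> t = c"
    using r_parents r_child by (auto simp: parents_def children_def)
  show "\<And>s. (s, w) \<notin> E" "\<And>t. (w, t) \<notin> E"
    using w network_edge_nodes[OF net] by blast+
  show "p \<noteq> r" "q \<noteq> r" "c \<noteq> r"
    using pr rc network_no_loop[OF net] by auto
  show "w \<noteq> p" "w \<noteq> q" "w \<noteq> r" "w \<noteq> c" "w \<noteq> a" "w \<noteq> b"
    using pr rc ab(1) w network_edge_nodes[OF net] by blast+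
qed

lemma indeg_head_moved:
  assumes "y \<in> V" "y \<noteq> r"
  shows "indeg (head_moved E p r q c a b w) y = indeg E y"
proof -
  let ?\<rho> = "\<lambda>s. if y = c \<and> s = r then q else if y = b \<and> s = a then w else s"
  have "parents (head_moved E p r q c a b w) y = ?\<rho> ` parents E y"
  proof (rule set_eqI)
    fix s
    show "s \<in> parents (head_moved E p r q c a b w) y \<longleftrightarrow> s \<in> ?\<rho> ` parents E y"
    proof (cases "y = c \<and> s = q")
      case True
      then show ?thesis using edges_at_r_and_w unfolding parents_def head_moved_def by (auto intro!: bexI[of _ r])
    next
      case False
      then show ?thesis using assms edges_at_r_and_w ab qc w unfolding parents_def head_moved_def image_iff by auto
    qed
  qed
  moreover have "inj_on ?\<rho> (parents E y)"
    using assms edges_at_r_and_w ab qc w unfolding inj_on_def parents_def by auto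
  ultimately show ?thesis unfolding indeg_def by (simp only: card_image)
qed

lemma outdeg_head_moved:
  assumes "y \<in> V" "y \<noteq> r"
  shows "outdeg (head_moved E p r q c a b w) y = outdeg E y"
proof -
  let ?\<rho> = "\<lambda>t. if y = q \<and> t = r then c else if y = p \<and> t = r then w else if y = a \<and> t = b then w else t"
  have "children (head_moved E p r q c a b w) y = ?\<rho> ` children E y"
  proof (rule set_eqI)
    fix t
    show "t \<in> children (head_moved E p r q c a b w) y \<longleftrightarrow> t \<in> ?\<rho> ` children E y"
    proof (cases "y = q \<and> t = c")
      case True
      then show ?thesis using edges_at_r_and_w pq unfolding children_def head_moved_def by (auto intro!: bexI[of _ r])
    next
      case False
      then show ?thesis using assms edges_at_r_and_w ab qc ap pq w unfolding children_def head_moved_def image_iff by auto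
    qed
  qed
  moreover have "inj_on ?\<rho> (children E y)"
    using assms edges_at_r_and_w ab qc ap pq unfolding inj_on_def children_def by auto
  ultimately show ?thesis unfolding outdeg_def by (simp only: card_image)
qed

lemma parents_head_moved_new: "parents (head_moved E p r q c a b w) w = {a, p}"
  using edges_at_r_and_w unfolding parents_def head_moved_def by auto

lemma children_head_moved_new: "children (head_moved E p r q c a b w) w = {b}"
  using edges_at_r_and_w unfolding children_def head_moved_def by auto

lemma is_network_head_moved:
  assumes acyc: "acyclic (head_moved E p r q c a b w)"
  shows "is_network X lab (insert w (V - {r})) (head_moved E p r q c a b w)"
proof -
  let ?V = "insert w (V - {r})" and ?E = "head_moved E p r q c a b w"
  have deg_r: "indeg E r = 2" "outdeg E r = 1"
    unfolding indeg_def outdeg_def r_parents r_child using pq by auto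
  have deg_w: "indeg ?E w = 2" "outdeg ?E w = 1"
    unfolding indeg_def outdeg_def parents_head_moved_new children_head_moved_new using ap by auto
  have same_kind: "{y \<in> ?V. indeg ?E y = i \<and> outdeg ?E y = j} = {y \<in> V. indeg E y = i \<and> outdeg E y = j}"
    if "i \<le> 1" for i j
  proof (rule set_eqI)
    fix y
    show "y \<in> {y \<in> ?V. indeg ?E y = i \<and> outdeg ?E y = j} \<longleftrightarrow> y \<in> {y \<in> V. indeg E y = i \<and> outdeg E y = j}"
      using indeg_head_moved[of y] outdeg_head_moved[of y] deg_r deg_w that w
      by (cases "y = r"; cases "y = w") auto
  qed
  have "?E \<subseteq> ?V \<times> ?V"
    using is_networkD(2)[OF net] edges_at_r_and_w ab
    unfolding head_moved_def by (auto dest: network_edge_nodes[OF net])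
  moreover have "(indeg ?E y = 0 \<and> outdeg ?E y = 1) \<or> (indeg ?E y = 1 \<and> outdeg ?E y = 0) \<or>
      split_node ?E y \<or> reticulation ?E y" if "y \<in> ?V" for y
  proof (cases "y = w")
    case False
    then show ?thesis
      using that is_networkD(5)[OF net, of y] indeg_head_moved[of y] outdeg_head_moved[of y]
      unfolding split_node_def reticulation_def by auto
  qed (simp add: deg_w reticulation_def)
  ultimately show ?thesis
    using net acyc w unfolding is_network_def same_kind[OF le0] same_kind[OF order.refl] by auto
qed

lemma head_step_head_moved:
  assumes "acyclic (head_moved E p r q c a b w)"
  shows "((V, E), (insert w (V - {r}), head_moved E p r q c a b w)) \<in> head_step X lab"
proof -
  define E1 where "E1 = (E - {(p, r)} - {(a, b)}) \<union> {(a, w), (w, b)}"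
  define E2 where "E2 = (E1 - {(q, r), (r, c)}) \<union> {(q, c)}"
  have "subdivide V (E - {(p, r)}) (a, b) w (insert w V) E1"
    unfolding subdivide_def E1_def using ab edges_at_r_and_w w by simp
  moreover have "suppress (insert w V) E1 r (insert w V - {r}) E2"
  proof -
    have "parents E1 r = {q}" "children E1 r = {c}"
      using edges_at_r_and_w ab pq unfolding parents_def children_def E1_def by auto
    moreover have "(q, c) \<notin> E1" unfolding E1_def using qc edges_at_r_and_w by simp
    ultimately show ?thesis
      unfolding suppress_def E2_def using edges_at_r_and_w network_edge_nodes[OF net] by blast
  qed
  moreover have "(p, w) \<notin> E2" unfolding E2_def E1_def using edges_at_r_and_w ap by simp
  moreover have "head_moved E p r q c a b w = insert (p, w) E2"
    unfolding E2_def E1_def head_moved_def using edges_at_r_and_w ab pq by auto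
  moreover have "insert w (V - {r}) = insert w V - {r}" using edges_at_r_and_w by auto
  moreover have "reticulation E r"
    unfolding reticulation_def indeg_def outdeg_def r_parents r_child using pq by simp
  ultimately have "head_move X lab V E p r (a, b) (insert w (V - {r})) (head_moved E p r q c a b w)"
    unfolding head_move_def using net edges_at_r_and_w is_network_head_moved[OF assms] by metis
  then show ?thesis unfolding head_step_def by blast
qed

end

lemma acyclic_head_moved:
  assumes G: "finite G" "acyclic G" "w \<notin> Field G" "b \<noteq> w"
    and sub: "E \<subseteq> G" "(q, c) \<in> G\<^sup>+" "(a, b) \<in> G" "(p, b) \<in> G"
  shows "acyclic (head_moved E p r q c a b w \<union> G \<union> {(z, w) | z. (z, b) \<in> G})"
proof -
  let ?H = "insert (q, c) G"
  have "acyclic ?H" using acyclic_insert_trancl[OF G(2) sub(2)] .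
  moreover have "w \<notin> Field ?H"
    using G(3) sub(2) by (auto simp: Field_def dest: tranclD tranclD2)
  ultimately have "acyclic (insert (w, b) (?H \<union> {(z, w) | z. (z, b) \<in> ?H}))"
    using G(1,4) by (intro acyclic_insert_before) auto
  then show ?thesis
    by (rule acyclic_subset) (use sub in \<open>auto simp: head_moved_def\<close>)
qed

lemma head_step_network: "(N, (V', E')) \<in> head_step X lab \<Longrightarrow> is_network X lab V' E'"
  unfolding head_step_def head_move_def by auto

lemma head_steps_network:
  assumes "(N, (V', E')) \<in> head_step X lab ^^ n" "0 < n"
  shows "is_network X lab V' E'"
  using assms by (cases n) (auto elim: relpow_Suc_E intro: head_step_network)

text \<open>The last conclusion allows edges F that could be added before the move to be added
  after it as well, with their heads at b also redirected to the new node w.\<close>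
lemma head_move_fresh:
  assumes net: "is_network X lab V E"
    and r: "parents E r = {p, q}" "p \<noteq> q" "children E r = {c}" "(q, c) \<notin> E"
    and ab: "(a, b) \<in> E" "a \<noteq> r" "b \<noteq> r" "a \<noteq> p"
    and F: "F \<subseteq> V \<times> V" "acyclic (insert (p, b) (E \<union> F))"
  obtains w where "w \<notin> V" "\<And>y. (y, w) \<notin> E" "\<And>y. (w, y) \<notin> E"
    and "((V, E), (insert w (V - {r}), head_moved E p r q c a b w)) \<in> head_step X lab"
    and "parents (head_moved E p r q c a b w) w = {a, p}" "children (head_moved E p r q c a b w) w = {b}"
    and "acyclic (head_moved E p r q c a b w \<union> F \<union> {(z, w) | z. (z, b) \<in> F})"
proof -
  obtain w where w: "w \<notin> V" using network_fresh_node[OF net] .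
  let ?G = "insert (p, b) (E \<union> F)"
  have E: "(p, r) \<in> E" "(q, r) \<in> E" "(r, c) \<in> E" using r(1,3) by (auto simp: parents_def children_def)
  have G: "finite ?G" "?G \<subseteq> V \<times> V"
    using network_finite_edges[OF net] is_networkD(2)[OF net] F(1) E(1) ab(1) finite_subset[OF F(1)]
      is_networkD(1)[OF net] by (auto dest: network_edge_nodes[OF net])
  have "(q, c) \<in> ?G\<^sup>+" using E by (meson UnI1 insertI2 r_into_trancl trancl_into_trancl)
  then have acyc: "acyclic (head_moved E p r q c a b w \<union> ?G \<union> {(z, w) | z. (z, b) \<in> ?G})"
    using G(2) w ab(1) by (intro acyclic_head_moved[OF G(1) F(2)]) (auto simp: Field_def)
  then have "acyclic (head_moved E p r q c a b w)" by (rule acyclic_subset) auto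
  note move = net r(1-3) ab(1-3) r(4) ab(4) w
  show ?thesis
  proof (rule that[OF w])
    show "(y, w) \<notin> E" "(w, y) \<notin> E" for y using w network_edge_nodes[OF net] by blast+
    show "((V, E), (insert w (V - {r}), head_moved E p r q c a b w)) \<in> head_step X lab"
      using head_step_head_moved[OF move \<open>acyclic (head_moved E p r q c a b w)\<close>] .
    show "parents (head_moved E p r q c a b w) w = {a, p}" "children (head_moved E p r q c a b w) w = {b}"
      using parents_head_moved_new[OF move] children_head_moved_new[OF move] .
    show "acyclic (head_moved E p r q c a b w \<union> F \<union> {(z, w) | z. (z, b) \<in> F})"
      using acyc by (rule acyclic_subset) auto
  qed
qed

section \<open>Exchanging the heads of two edges\<close>

definition swap_heads :: "(nat \<times> nat) set \<Rightarrow> nat \<Rightarrow> nat \<Rightarrow> nat \<Rightarrow> nat \<Rightarrow> (nat \<times> nat) set" where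
  "swap_heads E a b c d = E - {(a, b), (c, d)} \<union> {(a, d), (c, b)}"

lemma swap_heads_commute: "swap_heads E a b c d = swap_heads E c d a b"
  unfolding swap_heads_def by auto

lemma head_moved_inverse:
  assumes "(p, r) \<in> E" "(q, r) \<in> E" "(r, c) \<in> E" "(a, b) \<in> E" "(q, c) \<notin> E"
    and "\<And>x. (x, w) \<notin> E" "\<And>x. (w, x) \<notin> E"
  shows "head_moved (head_moved E p r q c a b w) p w a b q c r = E"
  using assms unfolding head_moved_def by auto

lemma head_moved_return_swap_heads:
  assumes "(q, r) \<in> E" "(r, c) \<in> E" "(q, c) \<notin> E" "p \<noteq> q" "c \<noteq> r" "a \<noteq> r" "b \<noteq> r"
    and "\<And>x. (x, w) \<notin> E" "\<And>x. (w, x) \<notin> E"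
  shows "head_moved (head_moved E p r q c a b w) a w p b q c r = swap_heads E p r a b"
  using assms unfolding head_moved_def swap_heads_def by auto

lemma swap_heads_at_new_head:
  assumes "(q, c) \<notin> E" "(Q, b) \<notin> E" "(Q, Y) \<in> E" "Q \<noteq> a" "p \<noteq> a" "a \<noteq> r" "Q \<noteq> r" "Y \<noteq> r"
    and "\<And>x. (x, w) \<notin> E" "\<And>x. (w, x) \<notin> E" "w \<notin> {p, q, c, a, b, Q, Y}"
  shows "swap_heads (head_moved E p r q c a b w) a w Q Y = head_moved (swap_heads E a b Q Y) p r q c Q b w"
  using assms unfolding head_moved_def swap_heads_def by auto

lemma swap_heads_head_moved_commute:
  assumes "{(P, Z), (Q, Y), (P, Y), (Q, Z)} \<inter> {(p, r), (q, r), (r, c), (a, b), (q, c), (a, w), (w, b), (p, w)} = {}"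
  shows "swap_heads (head_moved E p r q c a b w) P Z Q Y = head_moved (swap_heads E P Z Q Y) p r q c a b w"
  using assms unfolding head_moved_def swap_heads_def by auto

text \<open>Two head moves: first (P, Z) onto (Q, Y), then (Q, w) back onto the edge (s, c)
  into which Z was suppressed.\<close>
lemma swap_heads_by_two_head_moves:
  assumes net: "is_network X lab V E"
    and Z: "parents E Z = {P, s}" "P \<noteq> s" "children E Z = {c}" "(s, c) \<notin> E"
    and QY: "(Q, Y) \<in> E" "Q \<noteq> Z" "Y \<noteq> Z" "Q \<noteq> P" "Q \<noteq> s"
    and PY: "(P, Y) \<notin> E"
    and acyc: "acyclic (E \<union> {(P, Y), (Q, Z)})"
  shows "((V, E), (V, swap_heads E P Z Q Y)) \<in> head_step X lab ^^ 2"
proof -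
  have E: "(P, Z) \<in> E" "(s, Z) \<in> E" "(Z, c) \<in> E" using Z(1,3) by (auto simp: parents_def children_def)
  have "{(Q, Z)} \<subseteq> V \<times> V" using network_edge_nodes[OF net] QY(1) E(1) by blast
  moreover have "acyclic (insert (P, Y) (E \<union> {(Q, Z)}))" using acyc by simp
  ultimately obtain w where w: "w \<notin> V" "\<And>y. (y, w) \<notin> E" "\<And>y. (w, y) \<notin> E"
    and step1: "((V, E), (insert w (V - {Z}), head_moved E P Z s c Q Y w)) \<in> head_step X lab"
    and w_E1: "parents (head_moved E P Z s c Q Y w) w = {Q, P}"
      "children (head_moved E P Z s c Q Y w) w = {Y}"
    by (rule head_move_fresh[OF net Z QY(1-4)]) blast
  define E1 where "E1 = head_moved E P Z s c Q Y w"
  have sw: "head_moved E1 Q w P Y s c Z = swap_heads E P Z Q Y"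
    unfolding E1_def using E Z(2,4) QY(2,3) w network_no_loop[OF net]
    by (intro head_moved_return_swap_heads) auto
  have acyc2: "acyclic (head_moved E1 Q w P Y s c Z)"
    unfolding sw swap_heads_def by (rule acyclic_subset[OF acyc]) auto
  have "(s, c) \<in> E1" "s \<noteq> w" "c \<noteq> w" "(P, Y) \<notin> E1" "Z \<notin> insert w (V - {Z})"
    using PY Z(2) QY(1) w(1) E network_edge_nodes[OF net] unfolding E1_def head_moved_def by auto
  then have "((insert w (V - {Z}), E1), (insert Z (insert w (V - {Z}) - {w}), head_moved E1 Q w P Y s c Z))
      \<in> head_step X lab"
    using head_step_head_moved[OF head_step_network[OF step1] w_E1(1) QY(4) w_E1(2), folded E1_def,
        OF _ _ _ _ QY(5)[symmetric] _ acyc2] by blast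
  moreover have "insert Z (insert w (V - {Z}) - {w}) = V"
    using w(1) E network_edge_nodes[OF net] by auto
  ultimately have "((insert w (V - {Z}), E1), (V, swap_heads E P Z Q Y)) \<in> head_step X lab"
    by (simp add: sw)
  with step1 show ?thesis unfolding E1_def by (rule relpow_2I)
qed

text \<open>Four head moves: (p, r) is moved onto (a, b), the heads of (a, w) and (Q, Y) are
  swapped at the new reticulation w, and (p, w) is moved back onto the edge (q, c).\<close>
lemma swap_heads_via_reticulation:
  assumes net: "is_network X lab V E"
    and r: "parents E r = {p, q}" "p \<noteq> q" "children E r = {c}" "(q, c) \<notin> E"
    and ab: "(a, b) \<in> E" "a \<noteq> r" "b \<noteq> r" "a \<noteq> p"
    and QY: "(Q, Y) \<in> E" "Q \<noteq> r" "Y \<noteq> r" "Q \<noteq> a" "Q \<noteq> p"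
    and new: "(p, b) \<notin> E" "(a, Y) \<notin> E" "(Q, b) \<notin> E" "(q, c) \<noteq> (Q, b)" "(q, c) \<noteq> (a, Y)"
    and acyc: "acyclic (E \<union> {(p, b), (Q, b), (a, Y)})"
  shows "((V, E), (V, swap_heads E a b Q Y)) \<in> head_step X lab ^^ 4"
proof -
  have E: "(p, r) \<in> E" "(q, r) \<in> E" "(r, c) \<in> E" using r(1,3) by (auto simp: parents_def children_def)
  have "{(Q, b), (a, Y)} \<subseteq> V \<times> V" using network_edge_nodes[OF net] ab(1) QY(1) by blast
  moreover have "acyclic (insert (p, b) (E \<union> {(Q, b), (a, Y)}))" using acyc by simp
  ultimately obtain w where w: "w \<notin> V" "\<And>y. (y, w) \<notin> E" "\<And>y. (w, y) \<notin> E"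
    and step1: "((V, E), (insert w (V - {r}), head_moved E p r q c a b w)) \<in> head_step X lab"
    and w_E1: "parents (head_moved E p r q c a b w) w = {a, p}"
      "children (head_moved E p r q c a b w) w = {b}"
    and acyc1: "acyclic (head_moved E p r q c a b w \<union> {(Q, b), (a, Y)} \<union> {(z, w) | z. (z, b) \<in> {(Q, b), (a, Y)}})"
    by (rule head_move_fresh[OF net r ab]) blast
  have w_ne: "w \<notin> {p, q, r, c, a, b, Q, Y}"
    using w(1) E ab(1) QY(1) network_edge_nodes[OF net] by blast
  define V1 E1 E3 where "V1 = insert w (V - {r})" and "E1 = head_moved E p r q c a b w"
    and "E3 = swap_heads E1 a w Q Y"
  have "(p, b) \<notin> E1" "(Q, Y) \<in> E1" "Q \<noteq> w" "Y \<noteq> w" "(a, Y) \<notin> E1"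
    using new QY r(2) ab(4) w_ne unfolding E1_def head_moved_def by auto
  moreover have "acyclic (E1 \<union> {(a, Y), (Q, w)})"
    using acyc1 unfolding E1_def by (rule acyclic_subset) auto
  ultimately have swap: "((V1, E1), (V1, E3)) \<in> head_step X lab ^^ 2"
    using swap_heads_by_two_head_moves[OF head_step_network[OF step1] w_E1(1) ab(4) w_E1(2)] QY(4,5)
    unfolding V1_def E1_def E3_def by blast
  have w_E3: "parents E3 w = {p, Q}" "children E3 w = {b}"
    using w_E1 ab(4) w_ne unfolding E1_def E3_def swap_heads_def parents_def children_def by auto
  have "E3 = head_moved (swap_heads E a b Q Y) p r q c Q b w"
    unfolding E3_def E1_def using r(4) new(3) QY ab(2,4) w(2,3) w_ne
    by (intro swap_heads_at_new_head) auto
  also have "head_moved \<dots> p w Q b q c r = swap_heads E a b Q Y"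
    using E ab QY new r(2,4) w(2,3) unfolding swap_heads_def by (intro head_moved_inverse) auto
  finally have sw: "head_moved E3 p w Q b q c r = swap_heads E a b Q Y" .
  have acyc4: "acyclic (head_moved E3 p w Q b q c r)"
    unfolding sw swap_heads_def by (rule acyclic_subset[OF acyc]) auto
  have "(q, c) \<in> E3" "q \<noteq> w" "c \<noteq> w" "(Q, b) \<notin> E3" "r \<notin> V1"
    using new w_ne r(4) QY ab E unfolding E3_def E1_def V1_def swap_heads_def head_moved_def by auto
  from head_step_head_moved[OF head_steps_network[OF swap zero_less_numeral] w_E3(1) QY(5)[symmetric]
      w_E3(2) this(1-4) r(2)[symmetric] this(5) acyc4]
  have "((V1, E3), (insert r (V1 - {w}), swap_heads E a b Q Y)) \<in> head_step X lab"
    unfolding sw .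
  moreover have "insert r (V1 - {w}) = V"
    using w(1) network_edge_nodes[OF net E(1)] unfolding V1_def by auto
  ultimately show ?thesis
    using relpow_4I[OF step1[folded V1_def E1_def] swap] by simp
qed

text \<open>When the child r0 of Z is a reticulation sharing the parent s with Z, the edge (Z, r0) is
  first parked on a leaf edge (a, l); then Z has a child w not adjacent to s, the heads are
  swapped at Z, and (Z, w) is moved back onto (s, c0).\<close>
lemma swap_heads_via_leaf:
  assumes net: "is_network X lab V E"
    and Z: "parents E Z = {P, s}" "P \<noteq> s" "children E Z = {r0}"
    and r0: "parents E r0 = {Z, s}" "children E r0 = {c0}" "(s, c0) \<notin> E"
    and al: "(a, l) \<in> E" "a \<noteq> r0" "a \<noteq> Z" "a \<noteq> s" "l \<noteq> Z"
    and QY: "(Q, Y) \<in> E" "(Q, Y) \<noteq> (a, l)" "Q \<noteq> r0" "Y \<noteq> r0" "Y \<noteq> Z" "Q \<noteq> P" "Q \<noteq> s"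
    and PY: "(P, Y) \<notin> E"
    and acyc: "acyclic (E \<union> {(Z, l), (P, Y), (Q, Z)})"
  shows "((V, E), (V, swap_heads E P Z Q Y)) \<in> head_step X lab ^^ 4"
proof -
  have E: "(P, Z) \<in> E" "(s, Z) \<in> E" "(Z, r0) \<in> E" "(s, r0) \<in> E" "(r0, c0) \<in> E"
    using Z(1,3) r0(1,2) by (auto simp: parents_def children_def)
  have ne: "Z \<noteq> s" "c0 \<noteq> Z" "P \<noteq> r0" "l \<noteq> r0" "Q \<noteq> Z" "P \<noteq> Z" "Z \<noteq> r0"
    using E network_no_loop[OF net] is_networkD(3)[OF net] al r0(1) Z(3) QY(1,4)
    by (auto simp: parents_def children_def acyclic_def dest: trancl_into_trancl2)
  have "{(P, Y), (Q, Z)} \<subseteq> V \<times> V" using network_edge_nodes[OF net] E(1) QY(1) by blast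
  moreover have "acyclic (insert (Z, l) (E \<union> {(P, Y), (Q, Z)}))" using acyc by simp
  ultimately obtain w where w: "w \<notin> V" "\<And>y. (y, w) \<notin> E" "\<And>y. (w, y) \<notin> E"
    and step1: "((V, E), (insert w (V - {r0}), head_moved E Z r0 s c0 a l w)) \<in> head_step X lab"
    and w_E1: "parents (head_moved E Z r0 s c0 a l w) w = {a, Z}"
      "children (head_moved E Z r0 s c0 a l w) w = {l}"
    and acyc1: "acyclic (head_moved E Z r0 s c0 a l w \<union> {(P, Y), (Q, Z)} \<union> {(z, w) | z. (z, l) \<in> {(P, Y), (Q, Z)}})"
    by (rule head_move_fresh[OF net r0(1) ne(1) r0(2,3) al(1,2) ne(4) al(3)]) blast
  have w_ne: "w \<notin> {P, s, Z, r0, c0, a, l, Q, Y}"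
    using w(1) E al(1) QY(1) network_edge_nodes[OF net] by blast
  define V1 E1 E3 where "V1 = insert w (V - {r0})" and "E1 = head_moved E Z r0 s c0 a l w"
    and "E3 = swap_heads E1 P Z Q Y"
  have "parents E1 Z = {P, s}" "children E1 Z = {w}" "(s, w) \<notin> E1" "(Q, Y) \<in> E1" "(P, Y) \<notin> E1"
    using Z E QY PY al ne w(2,3) w_ne unfolding E1_def head_moved_def parents_def children_def by auto
  moreover have "acyclic (E1 \<union> {(P, Y), (Q, Z)})"
    using acyc1 unfolding E1_def by (rule acyclic_subset) auto
  ultimately have swap: "((V1, E1), (V1, E3)) \<in> head_step X lab ^^ 2"
    using swap_heads_by_two_head_moves[OF head_step_network[OF step1]] Z(2) ne(5) QY(5,6,7)
    unfolding V1_def E1_def E3_def by blast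
  have w_E3: "parents E3 w = {Z, a}" "children E3 w = {l}"
    using w_E1 w_ne unfolding E1_def E3_def swap_heads_def parents_def children_def by auto
  have "E3 = head_moved (swap_heads E P Z Q Y) Z r0 s c0 a l w"
    unfolding E3_def E1_def using Z(2) QY(2,3,4) al ne PY r0(3) w_ne QY(1)
    by (intro swap_heads_head_moved_commute) auto
  also have "head_moved \<dots> Z w a l s c0 r0 = swap_heads E P Z Q Y"
    using E al QY PY Z(2) r0(3) ne w(2,3) unfolding swap_heads_def by (intro head_moved_inverse) auto
  finally have sw: "head_moved E3 Z w a l s c0 r0 = swap_heads E P Z Q Y" .
  have acyc4: "acyclic (head_moved E3 Z w a l s c0 r0)"
    unfolding sw swap_heads_def by (rule acyclic_subset[OF acyc]) auto
  have "(s, c0) \<in> E3" "s \<noteq> w" "c0 \<noteq> w" "(a, l) \<notin> E3" "r0 \<notin> V1"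
    using PY QY al w_ne ne unfolding E3_def E1_def V1_def swap_heads_def head_moved_def by auto
  from head_step_head_moved[OF head_steps_network[OF swap zero_less_numeral] w_E3(1) al(3)[symmetric]
      w_E3(2) this(1-4) ne(1)[symmetric] this(5) acyc4]
  have "((V1, E3), (insert r0 (V1 - {w}), swap_heads E P Z Q Y)) \<in> head_step X lab"
    unfolding sw .
  moreover have "insert r0 (V1 - {w}) = V"
    using w(1) network_edge_nodes[OF net E(3)] unfolding V1_def by auto
  ultimately show ?thesis
    using relpow_4I[OF step1[folded V1_def E1_def] swap] by simp
qed

lemma stacked_reticulation:
  assumes net: "is_network X lab V E"
    and "parents E Z = {P, s}" "children E Z = {c}" "(s, c) \<in> E"
  shows "s \<noteq> Z" "parents E c = {s, Z}" "reticulation E c" "children E s = {Z, c}"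
proof -
  have E: "(s, Z) \<in> E" "(Z, c) \<in> E" using assms(2,3) by (auto simp: parents_def children_def)
  then show sZ: "s \<noteq> Z" using network_no_loop[OF net] by auto
  show "parents E c = {s, Z}" "reticulation E c" using network_two_parents[OF net assms(4) E(2) sZ] by auto
  show "children E s = {Z, c}"
    using network_two_children[OF net E(1) assms(4)] E(2) network_no_loop[OF net] by auto
qed

text \<open>Here (s, c) blocks the two-move exchange at Z, and c is a reticulation with parents Z and s.
  If s is not below Y, c itself is borrowed as in swap_heads_via_reticulation; otherwise a leaf
  edge is used.\<close>
lemma swap_heads_at_stacked_reticulation:
  assumes net: "is_network X lab V E"
    and Z: "parents E Z = {P, s}" "P \<noteq> s" "children E Z = {c}" "(s, c) \<in> E"
    and QY: "(Q, Y) \<in> E" "Q \<noteq> P" "Q \<noteq> s" "Q \<noteq> Z" "Y \<noteq> Z" "\<not> reticulation E Q" "(Y, Q) \<notin> E\<^sup>*"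
    and PY: "(P, Y) \<notin> E"
    and acyc: "acyclic (E \<union> {(P, Y), (Q, Z)})"
  shows "\<exists>n \<le> 4. ((V, E), (V, swap_heads E P Z Q Y)) \<in> head_step X lab ^^ n"
proof -
  have E: "(P, Z) \<in> E" "(s, Z) \<in> E" "(Z, c) \<in> E" using Z(1,3) by (auto simp: parents_def children_def)
  note stacked = stacked_reticulation[OF net Z(1,3,4)]
  note sZ = stacked(1) and c_parents = stacked(2) and ret_c = stacked(3) and s_children = stacked(4)
  obtain c' where c': "children E c = {c'}" using reticulation_child[OF ret_c] .
  have cc': "(c, c') \<in> E" using c' by (auto simp: children_def)
  have ne: "c \<noteq> Y" "c \<noteq> Q" "c \<noteq> P" "c \<noteq> Z" "c' \<noteq> Z" "c' \<noteq> c"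
    using QY(1,2,3,4,6) c_parents ret_c E cc' network_no_loop[OF net] is_networkD(3)[OF net]
    by (auto simp: parents_def acyclic_def dest: trancl_into_trancl2)
  have "(Z, c') \<notin> E" "(s, c') \<notin> E" "(s, Y) \<notin> E"
    using Z(3) s_children ne QY(5) by (auto simp: children_def)
  have "(Q, Z) \<notin> E" using Z(1) QY(2,3) by (auto simp: parents_def)
  show ?thesis
  proof (cases "(Y, s) \<in> E\<^sup>*")
    case False
    have "(Y, P) \<notin> (insert (Q, Z) E)\<^sup>*" using acyc by (simp add: insert_commute)
    then have "(Y, s) \<notin> (E \<union> {(P, Y), (Q, Z)})\<^sup>*"
      using not_rtrancl_insert[OF not_rtrancl_insert[OF False QY(7)]] by simp
    then have "acyclic (insert (s, Y) (E \<union> {(P, Y), (Q, Z)}))" using acyc by simp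
    then have acyc3: "acyclic (E \<union> {(s, Y), (P, Y), (Q, Z)})" by (rule acyclic_subset) auto
    have "((V, E), (V, swap_heads E Q Y P Z)) \<in> head_step X lab ^^ 4"
      by (rule swap_heads_via_reticulation[OF net c_parents sZ c' \<open>(Z, c') \<notin> E\<close> QY(1) _ _ QY(3) E(1)
            _ _ QY(2)[symmetric] Z(2) \<open>(s, Y) \<notin> E\<close> \<open>(Q, Z) \<notin> E\<close> PY _ _ acyc3])
        (use ne QY(4) E(1) network_no_loop[OF net] in auto)
    then show ?thesis by (auto simp: swap_heads_commute)
  next
    case True
    obtain a l where al: "(a, l) \<in> E" "l \<noteq> c'" and leaf: "\<And>t. (l, t) \<notin> E"
      using network_leaf_edge[OF net] by blast
    have l: "Y \<noteq> l" "l \<noteq> Z" "l \<noteq> P" "l \<noteq> Q"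
      using True E leaf QY(1) by (metis converse_rtranclE)+
    have "l \<in> children E a" using al(1) by (simp add: children_def)
    then have a: "a \<noteq> c" "a \<noteq> Z" "a \<noteq> s" using al(2) c' Z(3) s_children leaf E(3) cc' by auto
    have "acyclic (E \<union> {(Z, l), (P, Y), (Q, Z)})"
      using acyclic_insert_sink[OF acyc, of l Z] leaf l by auto
    then have "((V, E), (V, swap_heads E P Z Q Y)) \<in> head_step X lab ^^ 4"
      using c_parents ne QY(2,3) l
      by (intro swap_heads_via_leaf[OF net Z(1-3) _ c' \<open>(s, c') \<notin> E\<close> al(1) a l(2) QY(1) _ _ _ QY(5)
            _ _ PY]) (auto simp: insert_commute)
    then show ?thesis by blast
  qed
qed

lemma swap_heads_at_reticulation:
  assumes net: "is_network X lab V E"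
    and Z: "parents E Z = {P, s}" "P \<noteq> s"
    and QY: "(Q, Y) \<in> E" "(Q, Z) \<notin> E" "Y \<noteq> Z" "\<not> reticulation E Q" "(Y, Q) \<notin> E\<^sup>*"
    and PY: "(P, Y) \<notin> E"
    and acyc: "acyclic (E \<union> {(P, Y), (Q, Z)})"
  shows "\<exists>n \<le> 4. ((V, E), (V, swap_heads E P Z Q Y)) \<in> head_step X lab ^^ n"
proof -
  have E: "(P, Z) \<in> E" "(s, Z) \<in> E" using Z(1) by (auto simp: parents_def)
  have ret: "reticulation E Z" using network_two_parents(1)[OF net E Z(2)] .
  obtain c where c: "children E Z = {c}" using reticulation_child[OF ret] .
  have Q: "Q \<noteq> P" "Q \<noteq> s" "Q \<noteq> Z" using QY(2,4) E ret by auto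
  show ?thesis
  proof (cases "(s, c) \<in> E")
    case False
    then show ?thesis
      using swap_heads_by_two_head_moves[OF net Z c False QY(1) Q(3) QY(3) Q(1,2) PY acyc]
      by (intro exI[of _ 2]) simp
  qed (rule swap_heads_at_stacked_reticulation[OF net Z c _ QY(1) Q QY(3,4,5) PY acyc])
qed

lemma swap_tree_heads_via_reticulation:
  assumes net: "is_network X lab V E"
    and r: "parents E r = {p, q}" "p \<noteq> q" "children E r = {c}" "(q, c) \<notin> E"
    and ab: "(a, b) \<in> E" "parents E b = {a}" "a \<noteq> r" "a \<noteq> p"
    and QY: "(Q, Y) \<in> E" "parents E Y = {Q}" "Q \<noteq> r" "Q \<noteq> p" "Q \<noteq> a"
    and new: "(a, Y) \<notin> E" "(Q, b) \<notin> E"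
    and acyc: "acyclic (E \<union> {(a, Y), (Q, b)})" "(b, p) \<notin> E\<^sup>*" "(b, Q) \<notin> E\<^sup>*"
  shows "((V, E), (V, swap_heads E a b Q Y)) \<in> head_step X lab ^^ 4"
proof -
  have "(r, c) \<in> E" "(p, r) \<in> E" "(q, r) \<in> E" using r(1,3) by (auto simp: parents_def children_def)
  then have ne: "b \<noteq> r" "Y \<noteq> r" "c \<noteq> b" "c \<noteq> Y" "(p, b) \<notin> E"
    using ab(2,3,4) QY(2,3) r(1,2) by (auto simp: parents_def doubleton_eq_iff)
  have "(b, a) \<notin> E\<^sup>*"
    using ab(1) is_networkD(3)[OF net] by (meson acyclic_def rtrancl_into_trancl1)
  then have "(b, p) \<notin> (insert (a, Y) (insert (Q, b) E))\<^sup>*"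
    using acyc(2,3) by (intro not_rtrancl_insert) (simp_all add: not_rtrancl_insert)
  then have "acyclic (insert (p, b) (E \<union> {(a, Y), (Q, b)}))"
    using acyc(1) by simp
  then have "acyclic (E \<union> {(p, b), (Q, b), (a, Y)})"
    by (rule acyclic_subset) auto
  then show ?thesis
    using ne by (intro swap_heads_via_reticulation[OF net r ab(1) ab(3) _ ab(4) QY(1) QY(3) _ QY(5,4) _ new(1,2)]) auto
qed

section \<open>The tail move as a head exchange\<close>

context
  fixes X :: "'x set" and lab :: "'x \<Rightarrow> nat" and V E and x u v aL aR :: nat
  assumes net: "is_network X lab V E"
    and x: "split_node E x" "(x, u) \<in> E" "(x, aR) \<in> E" "u \<noteq> aR"
    and u: "split_node E u" "(u, aL) \<in> E" "(u, v) \<in> E" "v \<noteq> aL" "v \<noteq> aR"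
    and LR: "aL \<noteq> aR"
begin

private lemma children_x: "children E x = {u, aR}"
  using split_node_children[OF x] .

private lemma children_u: "children E u = {aL, v}"
  using split_node_children[OF u(1,2,3)] u(4) by auto

private lemma not_reticulation: "\<not> reticulation E x" "\<not> reticulation E u"
  using x(1) u(1) by (auto simp: split_node_def reticulation_def)

private lemma swapped_edges_new: "(x, aL) \<notin> E" "(u, aR) \<notin> E"
  using children_x children_u LR u(5) u(2) network_no_loop[OF net]
  by (auto simp: children_def set_eq_iff) blast

private lemma no_path_aL_x: "(aL, x) \<notin> E\<^sup>*"
proof -
  have "(x, aL) \<in> E\<^sup>+" using x(2) u(2) by auto
  then show ?thesis using is_networkD(3)[OF net] by (meson acyclic_def trancl_rtrancl_trancl)
qed

private lemma no_path_aR_u: "(aR, u) \<notin> E\<^sup>*"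
proof
  assume "(aR, u) \<in> E\<^sup>*"
  then have "(aR, x) \<in> E\<^sup>*"
    using split_node_parent[OF u(1) x(2)] x(4) by (auto simp: parents_def elim: rtranclE)
  then show False using x(3) is_networkD(3)[OF net] by (meson acyclic_def rtrancl_into_trancl2)
qed

private lemma acyclic_swapped: "acyclic (E \<union> {(x, aL), (u, aR)})"
proof -
  have "acyclic (insert (u, aR) E)" using is_networkD(3)[OF net] no_path_aR_u by simp
  moreover have "(x, aL) \<in> (insert (u, aR) E)\<^sup>+"
    using x(2) u(2) by (meson insertI2 r_into_trancl trancl_into_trancl)
  ultimately have "acyclic (insert (x, aL) (insert (u, aR) E))" by (rule acyclic_insert_trancl)
  then show ?thesis by (simp add: insert_commute)
qed

text \<open>Take a lowest reticulation r. A parent p of r cannot lie below both aL and aR, for then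
  a reticulation would lie above p and hence above r; so the heads can be swapped through r
  from the side of aL or of aR.\<close>
lemma swap_heads_tree_heads:
  assumes "reticulations V E \<noteq> {}" "\<not> reticulation E aL" "\<not> reticulation E aR"
  shows "\<exists>n \<le> 4. ((V, E), (V, swap_heads E x aR u aL)) \<in> head_step X lab ^^ n"
proof -
  have pL: "parents E aL = {u}" using network_unique_parent[OF net u(2) assms(2)] .
  have pR: "parents E aR = {x}" using network_unique_parent[OF net x(3) assms(3)] .
  have nRL: "(aR, aL) \<notin> E\<^sup>*" using pL LR no_path_aR_u by (auto simp: parents_def elim: rtranclE)
  have nLR: "(aL, aR) \<notin> E\<^sup>*" using pR LR no_path_aL_x by (auto simp: parents_def elim: rtranclE)
  obtain r where r: "reticulation E r" "\<And>m. reticulation E m \<Longrightarrow> (m, r) \<notin> E\<^sup>+"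
    using network_lowest_reticulation[OF net assms(1)] by blast
  obtain c where c: "children E r = {c}" using reticulation_child[OF r(1)] .
  have rc: "(r, c) \<in> E" using c by (auto simp: children_def)
  have r_ne: "r \<noteq> x" "r \<noteq> u" "r \<noteq> aL" "r \<noteq> aR" using not_reticulation assms(2,3) r(1) by auto
  have c_ne: "c \<noteq> aL" "c \<noteq> aR" using pL pR rc r_ne by (auto simp: parents_def)
  have "(u, c) \<notin> E" if "(u, r) \<in> E"
    using that children_u r_ne c_ne rc network_no_loop[OF net] by (auto simp: children_def)
  then obtain p q where pq: "parents E r = {p, q}" "p \<noteq> q" "(q, c) \<notin> E" "p \<noteq> u"
    using reticulation_parents_avoiding[OF net r(1) c] by blast
  have "p \<noteq> x" using pq(1) children_x r_ne by (auto simp: parents_def children_def)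
  show ?thesis
  proof (cases "(aR, p) \<in> E\<^sup>*")
    case False
    have "((V, E), (V, swap_heads E x aR u aL)) \<in> head_step X lab ^^ 4"
      by (rule swap_tree_heads_via_reticulation[OF net pq(1,2) c pq(3) x(3) pR _ _ u(2) pL _ _ _
            swapped_edges_new acyclic_swapped False no_path_aR_u])
        (use r_ne pq(4) \<open>p \<noteq> x\<close> x(2) network_no_loop[OF net] in auto)
    then show ?thesis by blast
  next
    case True
    have "(aL, p) \<notin> E\<^sup>*"
    proof
      assume "(aL, p) \<in> E\<^sup>*"
      then obtain m where "reticulation E m" "(m, p) \<in> E\<^sup>*"
        using common_descendant_below_reticulation[OF net nRL nLR True] by blast
      moreover have "(p, r) \<in> E" using pq(1) by (auto simp: parents_def)
      ultimately show False using r(2) by (meson rtrancl_into_trancl1)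
    qed
    then have "((V, E), (V, swap_heads E u aL x aR)) \<in> head_step X lab ^^ 4"
      using acyclic_swapped
      by (intro swap_tree_heads_via_reticulation[OF net pq(1,2) c pq(3) u(2) pL _ _ x(3) pR _ _ _
            swapped_edges_new(2,1) _ _ no_path_aL_x])
        (use r_ne pq(4) \<open>p \<noteq> x\<close> x(2) network_no_loop[OF net] in \<open>auto simp: insert_commute\<close>)
    then show ?thesis by (auto simp: swap_heads_commute)
  qed
qed

lemma swap_heads_tail_configuration:
  assumes "reticulations V E \<noteq> {}"
  shows "\<exists>n \<le> 4. ((V, E), (V, swap_heads E x aR u aL)) \<in> head_step X lab ^^ n"
proof -
  have no_back: "(b, a) \<notin> E\<^sup>*" if "(a, b) \<in> E" for a b
    using that is_networkD(3)[OF net] by (meson acyclic_def rtrancl_into_trancl2)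
  show ?thesis
  proof (cases "reticulation E aR")
    case True
    then obtain s where "parents E aR = {x, s}" "x \<noteq> s" using reticulation_parents x(3) by metis
    then show ?thesis
      using swap_heads_at_reticulation[OF net _ _ u(2) swapped_edges_new(2) LR not_reticulation(2)
          no_back[OF u(2)] swapped_edges_new(1) acyclic_swapped] by blast
  next
    case nretR: False
    show ?thesis
    proof (cases "reticulation E aL")
      case True
      then obtain s where "parents E aL = {u, s}" "u \<noteq> s" using reticulation_parents u(2) by metis
      then have "\<exists>n \<le> 4. ((V, E), (V, swap_heads E u aL x aR)) \<in> head_step X lab ^^ n"
        using acyclic_swapped LR
        by (intro swap_heads_at_reticulation[OF net _ _ x(3) swapped_edges_new(1) _ not_reticulation(1)
              no_back[OF x(3)] swapped_edges_new(2)]) (auto simp: insert_commute)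
      then show ?thesis by (simp add: swap_heads_commute)
    qed (use swap_heads_tree_heads[OF assms _ nretR] in blast)
  qed
qed

end

lemma net_iso_image:
  assumes "inj_on \<phi> V" "T \<subseteq> V \<times> V" "\<And>y. y \<in> X \<Longrightarrow> \<phi> (lab y) = lab y"
  shows "net_iso X lab V T (\<phi> ` V) (map_prod \<phi> \<phi> ` T)"
  unfolding net_iso_def
proof (intro exI[of _ \<phi>] conjI ballI)
  show "bij_betw \<phi> V (\<phi> ` V)" using assms(1) by (simp add: bij_betw_imageI)
  fix a b assume ab: "a \<in> V" "b \<in> V"
  show "(a, b) \<in> T \<longleftrightarrow> (\<phi> a, \<phi> b) \<in> map_prod \<phi> \<phi> ` T"
  proof
    assume "(\<phi> a, \<phi> b) \<in> map_prod \<phi> \<phi> ` T"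
    then obtain c d where "(c, d) \<in> T" "\<phi> c = \<phi> a" "\<phi> d = \<phi> b" by auto
    moreover from this(1) have "c \<in> V" "d \<in> V" using assms(2) by auto
    ultimately show "(a, b) \<in> T" using assms(1) ab by (metis inj_onD)
  qed (simp add: rev_image_eqI)
qed (use assms(3) in blast)

lemma tail_move_from_split_node:
  assumes net: "is_network X lab V E"
    and xu: "(x, u) \<in> E" and u: "split_node E u" "(u, aL) \<in> E" "(u, v) \<in> E" "v \<noteq> aL"
    and "u \<noteq> aR" and tm: "tail_move X lab V E u v (x, aR) V' E'"
  obtains u' where "u' \<notin> V" "(x, aR) \<in> E" "v \<noteq> aR" "V' = insert u' (V - {u})"
    "E' = E - {(u, v), (x, aR), (x, u), (u, aL)} \<union> {(x, u'), (u', aR), (x, aL), (u', v)}"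
proof -
  obtain u' V1 E1 V2 E2 where sd: "subdivide V (E - {(u, v)}) (x, aR) u' V1 E1"
    and sp: "suppress V1 E1 u V2 E2" and new: "(u', v) \<notin> E2" "V' = V2" "E' = insert (u', v) E2"
    using tm unfolding tail_move_def by blast
  have u': "u' \<notin> V" "V1 = insert u' V" "E1 = (E - {(u, v)} - {(x, aR)}) \<union> {(x, u'), (u', aR)}"
    and xaR: "(x, aR) \<in> E"
    using sd unfolding subdivide_def by auto
  have ne: "x \<noteq> u" "u \<noteq> aL" "u \<noteq> v" "u' \<noteq> u" "u' \<noteq> x" "u' \<noteq> aR"
    using xu u(2,3) network_no_loop[OF net] network_edge_nodes[OF net xu] network_edge_nodes[OF net xaR]
      u'(1) by auto
  obtain a b where "parents E1 u = {a}" "children E1 u = {b}" and V2: "V2 = V1 - {u}"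
    and E2: "E2 = E1 - {(a, u), (u, b)} \<union> {(a, b)}"
    using sp unfolding suppress_def by blast
  moreover have "(x, u) \<in> E1" "(u, aL) \<in> E1" unfolding u'(3) using xu u(2,4) ne \<open>u \<noteq> aR\<close> by auto
  ultimately have ab: "a = x" "b = aL" by (auto simp: parents_def children_def)
  show ?thesis
  proof (rule that[OF u'(1) xaR])
    show "v \<noteq> aR" using new(1) ne unfolding E2 u'(3) ab by auto
    show "V' = insert u' (V - {u})" unfolding new(2) V2 u'(2) using ne by auto
    show "E' = E - {(u, v), (x, aR), (x, u), (u, aL)} \<union> {(x, u'), (u', aR), (x, aL), (u', v)}"
      unfolding new(3) E2 u'(3) ab using ne by auto
  qed
qed

lemma tail_move_swap_heads_iso:
  assumes net: "is_network X lab V E"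
    and xu: "(x, u) \<in> E" and u: "split_node E u" "(u, aL) \<in> E" "(u, v) \<in> E" "v \<noteq> aL"
    and "u \<noteq> aR" and tm: "tail_move X lab V E u v (x, aR) V' E'"
  shows "v \<noteq> aR" "net_iso X lab V (swap_heads E x aR u aL) V' E'"
proof -
  obtain u' where u': "u' \<notin> V" "(x, aR) \<in> E" "v \<noteq> aR" "V' = insert u' (V - {u})"
    "E' = E - {(u, v), (x, aR), (x, u), (u, aL)} \<union> {(x, u'), (u', aR), (x, aL), (u', v)}"
    using tail_move_from_split_node[OF assms] by blast
  show "v \<noteq> aR" by (fact u'(3))
  define \<phi> where "\<phi> y = (if y = u then u' else y)" for y
  have u_edges: "(s, u) \<in> E \<longleftrightarrow> s = x" "(u, t) \<in> E \<longleftrightarrow> t = aL \<or> t = v" for s t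
    using split_node_parent[OF u(1) xu] split_node_children[OF u(1,2,3)] u(4)
    by (auto simp: parents_def children_def)
  have nodes: "u \<in> V" "x \<in> V" "aL \<in> V" "v \<in> V" "aR \<in> V"
    using network_edge_nodes[OF net xu] network_edge_nodes[OF net u(2)] network_edge_nodes[OF net u(3)]
      network_edge_nodes[OF net u'(2)] by auto
  have V': "V' = \<phi> ` V" unfolding u'(4) \<phi>_def using nodes u'(1) by (auto simp: image_iff)
  have E': "E' = map_prod \<phi> \<phi> ` swap_heads E x aR u aL"
  proof -
    define T0 where "T0 = E - {(u, v), (x, aR), (x, u), (u, aL)}"
    have "s \<noteq> u \<and> t \<noteq> u" if "(s, t) \<in> T0" for s t
      using that u_edges unfolding T0_def by blast
    then have "\<forall>e \<in> T0. map_prod \<phi> \<phi> e = e" by (auto simp: \<phi>_def)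
    then have "map_prod \<phi> \<phi> ` T0 = T0" by simp
    moreover have "swap_heads E x aR u aL = T0 \<union> {(x, u), (u, aR), (x, aL), (u, v)}"
      using xu u(3,4) \<open>u \<noteq> aR\<close> unfolding T0_def swap_heads_def by auto
    moreover have "x \<noteq> u" "aL \<noteq> u" "v \<noteq> u"
      using xu u(2,3) network_no_loop[OF net] by auto
    ultimately have "map_prod \<phi> \<phi> ` swap_heads E x aR u aL = T0 \<union> {(x, u'), (u', aR), (x, aL), (u', v)}"
      using \<open>u \<noteq> aR\<close> by (simp add: \<phi>_def)
    then show ?thesis unfolding u'(5) T0_def by auto
  qed
  have lab: "\<phi> (lab y) = lab y" if "y \<in> X" for y
  proof -
    have "lab y \<in> {w \<in> V. indeg E w = 1 \<and> outdeg E w = 0}" using is_networkD(6)[OF net] that by (meson bij_betwE)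
    then show ?thesis using u(1) by (auto simp: \<phi>_def split_node_def)
  qed
  have inj: "inj_on \<phi> V" using u'(1) by (auto simp: \<phi>_def inj_on_def)
  have sub: "swap_heads E x aR u aL \<subseteq> V \<times> V"
    using is_networkD(2)[OF net] nodes unfolding swap_heads_def by auto
  show "net_iso X lab V (swap_heads E x aR u aL) V' E'"
    using net_iso_image[OF inj sub lab] unfolding V' E' by simp
qed

theorem mainTheorem8:
  fixes X :: "'x set" and lab :: "'x \<Rightarrow> nat"
    and V V' :: "nat set" and E E' :: "(nat \<times> nat) set"
    and x u v aL aR :: nat
  assumes "is_network X lab V E"
    and "card (reticulations V E) > 0"
    and "split_node E x"
    and "(x, u) \<in> E" and "(x, aR) \<in> E" and "u \<noteq> aR"
    and "(u, aL) \<in> E" and "(u, v) \<in> E" and "v \<noteq> aL"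
    and "split_node E u"
    and "tail_move X lab V E u v (x, aR) V' E'"
  shows "\<exists>n \<le> 6. \<exists>V'' E''. ((V, E), (V'', E'')) \<in> head_step X lab ^^ n \<and>
           net_iso X lab V'' E'' V' E'"
proof -
  have vaR: "v \<noteq> aR" and iso: "net_iso X lab V (swap_heads E x aR u aL) V' E'"
    using tail_move_swap_heads_iso[OF assms(1,4,10,7,8,9,6,11)] by auto
  have "reticulations V E \<noteq> {}" using assms(2) by auto
  have "\<exists>n \<le> 4. ((V, E), (V, swap_heads E x aR u aL)) \<in> head_step X lab ^^ n"
  proof (cases "aL = aR")
    case True
    then have "swap_heads E x aR u aL = E" using assms(5,7) by (auto simp: swap_heads_def)
    then show ?thesis by (intro exI[of _ 0]) simp
  next
    case False
    show ?thesis
      using swap_heads_tail_configuration[OF assms(1,3,4,5,6,10,7,8,9) vaR False \<open>reticulations V E \<noteq> {}\<close>] .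
  qed
  then obtain n where "n \<le> 4" "((V, E), (V, swap_heads E x aR u aL)) \<in> head_step X lab ^^ n"
    by blast
  then show ?thesis using iso by (intro exI[of _ n]) auto
qed

end
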